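(* Let $V$ be a real inner product space with induced norm $\lVert\cdot\rVert$. Let $a,b,a',b'\in V$ and $\gamma\ge0$ satisfy \[ \max\{\lVert x-y\rVert : x,y\in\{a,b,a',b'\}\}\le\gamma\le \lVert a-b\rVert+\lVert a'-b'\rVert . \] Then, with $m=(a+b)/2$ and $m'=(a'+b')/2$, we have $\lVert m-m'\rVert\le\sqrt{\tfrac78}\,\gamma$. *)

theory Defs
  imports "HOL-Analysis.Analysis"
begin

end

theory Submission
  imports Defs
begin

text \<open>Expanding inner products gives the identity
  \<open>8 \<parallel>m - m'\<parallel>\<^sup>2 + 2 \<parallel>a - b\<parallel>\<^sup>2 + 2 \<parallel>a' - b'\<parallel>\<^sup>2 = 2 (\<parallel>a - a'\<parallel>\<^sup>2 + \<parallel>b - b'\<parallel>\<^sup>2 + \<parallel>a - b'\<parallel>\<^sup>2 + \<parallel>b - a'\<parallel>\<^sup>2)\<close>.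
  The four cross distances on the right are at most \<open>\<gamma>\<close>, while
  \<open>\<gamma>\<^sup>2 \<le> (\<parallel>a - b\<parallel> + \<parallel>a' - b'\<parallel>)\<^sup>2 \<le> 2 \<parallel>a - b\<parallel>\<^sup>2 + 2 \<parallel>a' - b'\<parallel>\<^sup>2\<close>, so
  \<open>8 \<parallel>m - m'\<parallel>\<^sup>2 \<le> 8 \<gamma>\<^sup>2 - \<gamma>\<^sup>2\<close>.\<close>

lemma norm_midpoint_diff_identity:
  fixes a b a' b' :: "'v::real_inner"
  shows "8 * (norm ((a + b) /\<^sub>R 2 - (a' + b') /\<^sub>R 2))\<^sup>2 + 2 * (norm (a - b))\<^sup>2 + 2 * (norm (a' - b'))\<^sup>2
    = 2 * (norm (a - a'))\<^sup>2 + 2 * (norm (b - b'))\<^sup>2 + 2 * (norm (a - b'))\<^sup>2 + 2 * (norm (b - a'))\<^sup>2"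
  unfolding power2_norm_eq_inner
  by (simp add: inner_diff_left inner_diff_right inner_add_left inner_add_right
      inner_commute algebra_simps)

lemma sum_square_le_twice_sum_squares:
  fixes p q :: "'a::linordered_idom"
  shows "(p + q)\<^sup>2 \<le> 2 * p\<^sup>2 + 2 * q\<^sup>2"
proof -
  have "2 * p\<^sup>2 + 2 * q\<^sup>2 = (p + q)\<^sup>2 + (p - q)\<^sup>2"
    by (simp add: power2_eq_square algebra_simps)
  then show ?thesis by simp
qed

lemma le_Max_pairwise_image:
  assumes "finite S" "x \<in> S" "y \<in> S"
  shows "f x y \<le> Max {f u v | u v. u \<in> S \<and> v \<in> S}"
proof (rule Max_ge)
  have "{f u v | u v. u \<in> S \<and> v \<in> S} = (\<lambda>(u, v). f u v) ` (S \<times> S)"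
    by auto
  then show "finite {f u v | u v. u \<in> S \<and> v \<in> S}"
    using assms(1) by simp
  show "f x y \<in> {f u v | u v. u \<in> S \<and> v \<in> S}"
    using assms(2,3) by blast
qed

theorem lemma2:
  fixes a b a' b' :: "'v::real_inner" and \<gamma> :: real
  assumes "\<gamma> \<ge> 0"
    and "Max {norm (x - y) | x y. x \<in> {a, b, a', b'} \<and> y \<in> {a, b, a', b'}} \<le> \<gamma>"
    and "\<gamma> \<le> norm (a - b) + norm (a' - b')"
  shows "norm ((a + b) /\<^sub>R 2 - (a' + b') /\<^sub>R 2) \<le> sqrt (7 / 8) * \<gamma>"
proof -
  have dist_sq_le: "(norm (x - y))\<^sup>2 \<le> \<gamma>\<^sup>2" if "x \<in> {a, b, a', b'}" "y \<in> {a, b, a', b'}" for x y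
    using le_Max_pairwise_image[of "{a, b, a', b'}" x y "\<lambda>u v. norm (u - v)"] that assms(2)
    by (simp add: power_mono)
  have "\<gamma>\<^sup>2 \<le> (norm (a - b) + norm (a' - b'))\<^sup>2"
    using assms(1,3) by (simp add: power_mono)
  also have "\<dots> \<le> 2 * (norm (a - b))\<^sup>2 + 2 * (norm (a' - b'))\<^sup>2"
    by (rule sum_square_le_twice_sum_squares)
  finally have "8 * (norm ((a + b) /\<^sub>R 2 - (a' + b') /\<^sub>R 2))\<^sup>2 \<le> 7 * \<gamma>\<^sup>2"
    using norm_midpoint_diff_identity[of a b a' b']
      dist_sq_le[of a a'] dist_sq_le[of b b'] dist_sq_le[of a b'] dist_sq_le[of b a']
    by simp
  then have "(norm ((a + b) /\<^sub>R 2 - (a' + b') /\<^sub>R 2))\<^sup>2 \<le> (sqrt (7 / 8) * \<gamma>)\<^sup>2"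
    by (simp add: power_mult_distrib)
  then show ?thesis
    using assms(1) by (simp add: power2_le_iff_abs_le)
qed

end
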